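(* Let $\Psi$ be a finite (possibly empty) composition of the substitutions $U$ and $V$. (i) If $\Psi(ab)=a^{e_1}ba^{e_2}b\cdots a^{e_n}b$ with integers $e_i\ge1$, then for every $i\in\{2,\dots,n\}$, in the lexicographic order, $(e_1,e_2,\dots,e_n,\infty)>(e_i,e_{i+1},\dots,e_n,\infty)$ and $(e_n,e_{n-1},\dots,e_1,\infty)<(e_{n-i+1},e_{n-i},\dots,e_1,\infty)$. (ii) If $\Psi(ab)=ab^{e_1}ab^{e_2}\cdots ab^{e_n}$ with integers $e_i\ge1$, then for every $i\in\{2,\dots,n\}$, in the lexicographic order, $(e_1,e_2,\dots,e_n,1,1,\dots)<(e_i,e_{i+1},\dots,e_n,1,1,\dots)$ and $(e_n,e_{n-1},\dots,e_1,1,1,\dots)>(e_{n-i+1},e_{n-i},\dots,e_1,1,1,\dots)$.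
   Context: Words are finite words in the letters $a,b$. The Nielsen moves are the substitutions $U:a\mapsto ab,\ b\mapsto b$ and $V:a\mapsto a,\ b\mapsto ab$, applied letterwise. Sequences are compared lexicographically, with $\infty$ regarded as larger than every integer; in (ii) the sequences are extended by infinitely many $1$'s. *)

theory Defs
  imports Main "HOL-Library.Extended_Nat"
begin

datatype letter = LA | LB

datatype nmove = MU | MV

fun nsub :: "nmove \<Rightarrow> letter \<Rightarrow> letter list" where
  "nsub MU LA = [LA, LB]"
| "nsub MU LB = [LB]"
| "nsub MV LA = [LA]"
| "nsub MV LB = [LA, LB]"

definition nmove_apply :: "nmove \<Rightarrow> letter list \<Rightarrow> letter list" where
  "nmove_apply m w = concat (map (nsub m) w)"

text \<open>Composition of a finite (possibly empty) list of moves: [m1,...,mk] gives m1 o ... o mk.\<close>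
definition nmoves_apply :: "nmove list \<Rightarrow> letter list \<Rightarrow> letter list" where
  "nmoves_apply ms = foldr (\<lambda>m f. nmove_apply m \<circ> f) ms id"

definition lex_less :: "(nat \<Rightarrow> 'a::linorder) \<Rightarrow> (nat \<Rightarrow> 'a) \<Rightarrow> bool" where
  "lex_less f g \<longleftrightarrow> (\<exists>k. (\<forall>j<k. f j = g j) \<and> f k < g k)"

text \<open>Finite sequence followed by infinity (then padded with infinity; irrelevant for the order).\<close>
definition seq_inf :: "nat list \<Rightarrow> nat \<Rightarrow> enat" where
  "seq_inf xs j = (if j < length xs then enat (xs ! j) else \<infinity>)"

definition seq_one :: "nat list \<Rightarrow> nat \<Rightarrow> nat" where
  "seq_one xs j = (if j < length xs then xs ! j else 1)"

end

theory Submission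
  imports Defs "HOL-Library.Sublist"
begin

text \<open>
  On words of form (i), V adds 1 to
  every exponent while U replaces each exponent e by e ones followed by a zero; on form (ii)
  the roles are swapped, with e becoming a zero followed by e ones. Each of these operations
  preserves the property that the exponent list is lexicographically (end of list = \<infinity>) larger
  than all its proper suffixes, and that its reverse is smaller than all of its proper suffixes.
  For the padding by 1's in (ii) one only has to exclude that a suffix is a prefix, which
  follows from the invariant of the reversed list.
\<close>

text \<open>The lexicographic order of lists terminated by \<infinity>, i.e. the order of \<open>seq_inf\<close>.\<close>

fun lex_inf_less :: "nat list \<Rightarrow> nat list \<Rightarrow> bool" where
  "lex_inf_less [] _ \<longleftrightarrow> False"
| "lex_inf_less (x # xs) [] \<longleftrightarrow> True"
| "lex_inf_less (x # xs) (y # ys) \<longleftrightarrow> x < y \<or> x = y \<and> lex_inf_less xs ys"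

lemma lex_less_case_nat_iff:
  "lex_less (case_nat a f) (case_nat b g) \<longleftrightarrow> a < b \<or> a = b \<and> lex_less f g"
proof
  assume "lex_less (case_nat a f) (case_nat b g)"
  then obtain k where eq: "\<forall>j<k. case_nat a f j = case_nat b g j"
    and less: "case_nat a f k < case_nat b g k"
    unfolding lex_less_def by blast
  show "a < b \<or> a = b \<and> lex_less f g"
  proof (cases k)
    case 0
    with less show ?thesis by simp
  next
    case (Suc k')
    with eq less have "a = b" "\<forall>j<k'. f j = g j" "f k' < g k'" by auto
    then show ?thesis unfolding lex_less_def by blast
  qed
next
  assume "a < b \<or> a = b \<and> lex_less f g"
  then show "lex_less (case_nat a f) (case_nat b g)"
  proof
    assume "a < b"
    then show ?thesis unfolding lex_less_def by (intro exI[of _ 0]) simp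
  next
    assume "a = b \<and> lex_less f g"
    then obtain k where "a = b" "\<forall>j<k. f j = g j" "f k < g k"
      unfolding lex_less_def by blast
    then show ?thesis unfolding lex_less_def
      by (intro exI[of _ "Suc k"]) (auto simp: less_Suc_eq_0_disj)
  qed
qed

lemma seq_inf_Cons: "seq_inf (x # xs) = case_nat (enat x) (seq_inf xs)"
  by (auto simp: seq_inf_def fun_eq_iff split: nat.split)

lemma seq_inf_Nil: "seq_inf [] = case_nat \<infinity> (seq_inf [])"
  by (auto simp: seq_inf_def fun_eq_iff split: nat.split)

lemma seq_one_Cons: "seq_one (x # xs) = case_nat x (seq_one xs)"
  by (auto simp: seq_one_def fun_eq_iff split: nat.split)

lemma lex_inf_less_imp_lex_less_seq_inf:
  "lex_inf_less x y \<Longrightarrow> lex_less (seq_inf x) (seq_inf y)"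
proof (induction x y rule: lex_inf_less.induct)
  case (2 x xs)
  show ?case by (subst seq_inf_Nil) (simp add: seq_inf_Cons lex_less_case_nat_iff)
qed (auto simp: seq_inf_Cons lex_less_case_nat_iff)

lemma lex_inf_less_imp_lex_less_seq_one:
  "lex_inf_less x y \<Longrightarrow> \<not> prefix y x \<Longrightarrow> lex_less (seq_one x) (seq_one y)"
  by (induction x y rule: lex_inf_less.induct) (auto simp: seq_one_Cons lex_less_case_nat_iff)

lemma lex_inf_less_append_same [simp]: "lex_inf_less (p @ x) (p @ y) \<longleftrightarrow> lex_inf_less x y"
  by (induction p) auto

lemma prefix_imp_not_lex_inf_less: "prefix p q \<Longrightarrow> \<not> lex_inf_less p q"
  by (induction p arbitrary: q) (auto simp: prefix_def)

lemma lex_inf_less_Nil_iff: "lex_inf_less x [] \<longleftrightarrow> x \<noteq> []"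
  by (cases x) auto

lemma lex_inf_less_map_Suc [simp]: "lex_inf_less (map Suc x) (map Suc y) \<longleftrightarrow> lex_inf_less x y"
  by (induction x y rule: lex_inf_less.induct) auto

lemma lex_inf_less_replicate_one:
  "j < e \<Longrightarrow> lex_inf_less (replicate j 1 @ 0 # x) (replicate e 1 @ y)"
proof (induction j arbitrary: e)
  case 0
  then show ?case by (cases e) auto
next
  case (Suc j)
  then show ?case by (cases e) auto
qed

lemma drop_concat_map_split:
  assumes "k < length (concat (map f xs))"
  shows "\<exists>m j. m < length xs \<and> j < length (f (xs ! m))
    \<and> k = length (concat (map f (take m xs))) + j
    \<and> drop k (concat (map f xs)) = drop j (f (xs ! m)) @ concat (map f (drop (Suc m) xs))"
  using assms
proof (induction xs arbitrary: k)
  case (Cons x xs)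
  show ?case
  proof (cases "k < length (f x)")
    case True
    then show ?thesis by (intro exI[of _ 0] exI[of _ k]) auto
  next
    case False
    with Cons.prems have "k - length (f x) < length (concat (map f xs))" by simp
    then obtain m j where "m < length xs" "j < length (f (xs ! m))"
      "k - length (f x) = length (concat (map f (take m xs))) + j"
      "drop (k - length (f x)) (concat (map f xs)) = drop j (f (xs ! m)) @ concat (map f (drop (Suc m) xs))"
      using Cons.IH by blast
    with False show ?thesis by (intro exI[of _ "Suc m"] exI[of _ j]) (auto simp: drop_append)
  qed
qed simp

text \<open>U maps \<open>a\<^sup>e b\<close> to \<open>(ab)\<^sup>e b\<close> and V maps \<open>a b\<^sup>e\<close> to \<open>a (ab)\<^sup>e\<close>.\<close>

definition tally :: "nat list \<Rightarrow> nat list" where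
  "tally x = concat (map (\<lambda>e. replicate e 1 @ [0]) x)"

definition rtally :: "nat list \<Rightarrow> nat list" where
  "rtally x = concat (map (\<lambda>e. 0 # replicate e 1) x)"

lemma tally_simps [simp]:
  "tally [] = []" "tally (e # x) = replicate e 1 @ 0 # tally x"
  by (simp_all add: tally_def)

lemma rtally_simps [simp]:
  "rtally [] = []" "rtally (e # x) = 0 # replicate e 1 @ rtally x"
  by (simp_all add: rtally_def)

lemma rev_tally: "rev (tally x) = rtally (rev x)"
  by (induction x) (simp_all add: rtally_def)

lemma rev_rtally: "rev (rtally x) = tally (rev x)"
  by (metis rev_tally rev_rev_ident)

lemma lex_inf_less_tally: "lex_inf_less x y \<Longrightarrow> lex_inf_less (tally x) (tally y)"
proof (induction x y rule: lex_inf_less.induct)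
  case (3 x xs y ys)
  then show ?case
    using lex_inf_less_replicate_one[of x y "tally xs" "0 # tally ys"]
    by auto
qed (simp_all add: lex_inf_less_Nil_iff)

lemma lex_inf_less_rtally:
  "lex_inf_less x y \<Longrightarrow> length y < length x \<Longrightarrow> lex_inf_less (rtally x) (rtally y)"
proof (induction x y rule: lex_inf_less.induct)
  case (3 x xs y ys)
  show ?case
  proof (cases "x < y")
    case True
    from "3.prems"(2) obtain e xs' where "xs = e # xs'" by (cases xs) auto
    with True show ?thesis
      using lex_inf_less_replicate_one[of x y "replicate e 1 @ rtally xs'" "rtally ys"] by simp
  next
    case False
    with "3" show ?thesis by simp
  qed
qed (simp_all add: lex_inf_less_Nil_iff)

definition suffixes_below :: "nat list \<Rightarrow> bool" where
  "suffixes_below x \<longleftrightarrow> (\<forall>k. 0 < k \<and> k < length x \<longrightarrow> lex_inf_less (drop k x) x)"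

definition suffixes_above :: "nat list \<Rightarrow> bool" where
  "suffixes_above x \<longleftrightarrow> (\<forall>k. 0 < k \<and> k < length x \<longrightarrow> lex_inf_less x (drop k x))"

lemma suffixes_below_nth_le_hd:
  assumes "suffixes_below x" "m < length x"
  shows "x ! m \<le> hd x"
proof (cases m)
  case (Suc m')
  with assms have "lex_inf_less (drop m x) x"
    unfolding suffixes_below_def by simp
  then have "lex_inf_less (x ! m # drop (Suc m) x) x"
    using Cons_nth_drop_Suc[OF assms(2)] by simp
  moreover obtain a y where "x = a # y"
    using assms(2) by (cases x) auto
  ultimately show ?thesis by auto
qed (use assms in \<open>simp add: hd_conv_nth\<close>)

lemma suffixes_below_tally:
  assumes "suffixes_below x"
  shows "suffixes_below (tally x)"
  unfolding suffixes_below_def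
proof (intro allI impI, elim conjE)
  fix k assume k_pos: "0 < k" and k_less: "k < length (tally x)"
  have "\<exists>m j. m < length x \<and> j < length (replicate (x ! m) (1::nat) @ [0])
      \<and> k = length (tally (take m x)) + j
      \<and> drop k (tally x) = drop j (replicate (x ! m) 1 @ [0]) @ tally (drop (Suc m) x)"
    using k_less unfolding tally_def by (rule drop_concat_map_split)
  then obtain m j where m: "m < length x" and j: "j < length (replicate (x ! m) (1::nat) @ [0])"
    and k_eq: "k = length (tally (take m x)) + j"
    and drop_eq: "drop k (tally x) = drop j (replicate (x ! m) 1 @ [0]) @ tally (drop (Suc m) x)"
    by blast
  show "lex_inf_less (drop k (tally x)) (tally x)"
  proof (cases "j = 0")
    case True
    with k_pos k_eq have "m \<noteq> 0" by (cases m) auto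
    with assms m have "lex_inf_less (drop m x) x"
      unfolding suffixes_below_def by simp
    moreover have "drop k (tally x) = tally (drop m x)"
      using drop_eq True by (simp add: Cons_nth_drop_Suc[OF m, symmetric])
    ultimately show ?thesis by (simp add: lex_inf_less_tally)
  next
    case False
    have "x ! m - j < hd x"
      using False j suffixes_below_nth_le_hd[OF assms m] by simp
    moreover have "drop k (tally x) = replicate (x ! m - j) 1 @ 0 # tally (drop (Suc m) x)"
      using drop_eq j by simp
    moreover have "tally x = replicate (hd x) 1 @ 0 # tally (tl x)"
      using m by (cases x) auto
    ultimately show ?thesis by (metis lex_inf_less_replicate_one)
  qed
qed

lemma suffixes_above_rtally:
  assumes "suffixes_above x"
  shows "suffixes_above (rtally x)"
  unfolding suffixes_above_def
proof (intro allI impI, elim conjE)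
  fix k assume k_pos: "0 < k" and k_less: "k < length (rtally x)"
  have "\<exists>m j. m < length x \<and> j < length (0 # replicate (x ! m) (1::nat))
      \<and> k = length (rtally (take m x)) + j
      \<and> drop k (rtally x) = drop j (0 # replicate (x ! m) 1) @ rtally (drop (Suc m) x)"
    using k_less unfolding rtally_def by (rule drop_concat_map_split)
  then obtain m j where m: "m < length x" and j: "j < length (0 # replicate (x ! m) (1::nat))"
    and k_eq: "k = length (rtally (take m x)) + j"
    and drop_eq: "drop k (rtally x) = drop j (0 # replicate (x ! m) 1) @ rtally (drop (Suc m) x)"
    by blast
  show "lex_inf_less (rtally x) (drop k (rtally x))"
  proof (cases "j = 0")
    case True
    with k_pos k_eq have "m \<noteq> 0" by (cases m) auto
    with assms m have "lex_inf_less x (drop m x)"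
      unfolding suffixes_above_def by simp
    moreover have "drop k (rtally x) = rtally (drop m x)"
      using drop_eq True by (simp add: Cons_nth_drop_Suc[OF m, symmetric])
    ultimately show ?thesis using \<open>m \<noteq> 0\<close> m by (simp add: lex_inf_less_rtally)
  next
    case False
    then obtain j' where "j = Suc j'" by (cases j) auto
    with j drop_eq have "drop k (rtally x) = 1 # replicate (x ! m - Suc j') 1 @ rtally (drop (Suc m) x)"
      by (simp add: Suc_diff_Suc[symmetric] del: Suc_diff_Suc)
    moreover have "rtally x = 0 # replicate (hd x) 1 @ rtally (tl x)"
      using m by (cases x) auto
    ultimately show ?thesis by simp
  qed
qed

lemma suffixes_below_map_Suc: "suffixes_below (map Suc x) \<longleftrightarrow> suffixes_below x"
  by (simp add: suffixes_below_def drop_map)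

lemma suffixes_above_map_Suc: "suffixes_above (map Suc x) \<longleftrightarrow> suffixes_above x"
  by (simp add: suffixes_above_def drop_map)

lemma drop_not_prefix:
  assumes "suffixes_below (rev x)" "0 < k" "k < length x"
  shows "\<not> prefix (drop k x) x"
proof
  assume "prefix (drop k x) x"
  then have "suffix (rev (drop k x)) (rev x)"
    by (simp add: suffix_to_prefix)
  then have "drop k (rev x) = rev (drop k x)"
    using suffix_take[of "rev (drop k x)" "rev x"] assms(3)
    by (metis append_take_drop_id length_drop length_rev diff_diff_cancel less_imp_le_nat same_append_eq)
  moreover have "prefix (rev (drop k x)) (rev x)"
    using suffix_drop[of k x] by (simp add: suffix_to_prefix)
  moreover have "lex_inf_less (drop k (rev x)) (rev x)"
    using assms unfolding suffixes_below_def by simp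
  ultimately show False
    using prefix_imp_not_lex_inf_less by metis
qed

definition a_blocks :: "nat list \<Rightarrow> letter list" where
  "a_blocks x = concat (map (\<lambda>e. replicate e LA @ [LB]) x)"

definition b_blocks :: "nat list \<Rightarrow> letter list" where
  "b_blocks x = concat (map (\<lambda>e. LA # replicate e LB) x)"

lemma a_blocks_simps [simp]:
  "a_blocks [] = []" "a_blocks (e # x) = replicate e LA @ LB # a_blocks x"
  "a_blocks (x @ y) = a_blocks x @ a_blocks y"
  by (simp_all add: a_blocks_def)

lemma b_blocks_simps [simp]:
  "b_blocks [] = []" "b_blocks (e # x) = LA # replicate e LB @ b_blocks x"
  "b_blocks (x @ y) = b_blocks x @ b_blocks y"
  by (simp_all add: b_blocks_def)

lemma nmove_apply_simps [simp]:
  "nmove_apply m [] = []"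
  "nmove_apply m (c # w) = nsub m c @ nmove_apply m w"
  "nmove_apply m (u @ v) = nmove_apply m u @ nmove_apply m v"
  by (simp_all add: nmove_apply_def)

lemma nmoves_apply_simps [simp]:
  "nmoves_apply [] w = w"
  "nmoves_apply (m # ms) w = nmove_apply m (nmoves_apply ms w)"
  by (simp_all add: nmoves_apply_def)

lemma nmove_apply_replicate [simp]:
  "nmove_apply MU (replicate e LA) = a_blocks (replicate e 1)"
  "nmove_apply MU (replicate e LB) = replicate e LB"
  "nmove_apply MV (replicate e LA) = replicate e LA"
  "nmove_apply MV (replicate e LB) = b_blocks (replicate e 1)"
  by (induction e) simp_all

lemma nmove_apply_a_blocks:
  "nmove_apply MU (a_blocks x) = a_blocks (tally x)"
  "nmove_apply MV (a_blocks x) = a_blocks (map Suc x)"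
  by (induction x) (simp_all add: replicate_append_same)

lemma nmove_apply_b_blocks:
  "nmove_apply MU (b_blocks x) = b_blocks (map Suc x)"
  "nmove_apply MV (b_blocks x) = b_blocks (rtally x)"
  by (induction x) simp_all

lemma replicate_append_eq_iff:
  assumes "u = [] \<or> hd u \<noteq> c" "v = [] \<or> hd v \<noteq> c"
  shows "replicate a c @ u = replicate b c @ v \<longleftrightarrow> a = b \<and> u = v"
  using assms
proof (induction a arbitrary: b)
  case 0
  then show ?case by (cases b) auto
next
  case (Suc a)
  then show ?case by (cases b) auto
qed

lemma a_blocks_inject: "a_blocks x = a_blocks y \<Longrightarrow> x = y"
proof (induction x arbitrary: y)
  case Nil
  then show ?case by (cases y) auto
next
  case (Cons e x)
  then show ?case by (cases y) (auto simp: replicate_append_eq_iff)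
qed

lemma b_blocks_hd: "b_blocks x = [] \<or> hd (b_blocks x) \<noteq> LB"
  by (cases x) auto

lemma b_blocks_inject: "b_blocks x = b_blocks y \<Longrightarrow> x = y"
proof (induction x arbitrary: y)
  case Nil
  then show ?case by (cases y) auto
next
  case (Cons e x)
  then obtain e' y' where y: "y = e' # y'" by (cases y) auto
  with Cons.prems have "replicate e LB @ b_blocks x = replicate e' LB @ b_blocks y'" by simp
  then have "e = e'" "b_blocks x = b_blocks y'"
    using replicate_append_eq_iff[OF b_blocks_hd b_blocks_hd] by blast+
  with Cons.IH y show ?case by simp
qed

lemma reachable_a_blocks:
  "\<exists>x. nmoves_apply ms [LA, LB] = a_blocks x \<and> suffixes_below x \<and> suffixes_above (rev x)"
proof (induction ms)
  case Nil
  show ?case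
    by (intro exI[of _ "[1]"]) (auto simp: suffixes_below_def suffixes_above_def)
next
  case (Cons m ms)
  then obtain x where x: "nmoves_apply ms [LA, LB] = a_blocks x"
    "suffixes_below x" "suffixes_above (rev x)" by blast
  show ?case
  proof (cases m)
    case MU
    with x show ?thesis
      by (intro exI[of _ "tally x"])
        (simp add: nmove_apply_a_blocks suffixes_below_tally rev_tally suffixes_above_rtally)
  next
    case MV
    with x show ?thesis
      by (intro exI[of _ "map Suc x"])
        (simp add: nmove_apply_a_blocks suffixes_below_map_Suc suffixes_above_map_Suc rev_map)
  qed
qed

lemma reachable_b_blocks:
  "\<exists>x. nmoves_apply ms [LA, LB] = b_blocks x \<and> suffixes_below (rev x) \<and> suffixes_above x"
proof (induction ms)
  case Nil
  show ?case
    by (intro exI[of _ "[1]"]) (auto simp: suffixes_below_def suffixes_above_def)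
next
  case (Cons m ms)
  then obtain x where x: "nmoves_apply ms [LA, LB] = b_blocks x"
    "suffixes_below (rev x)" "suffixes_above x" by blast
  show ?case
  proof (cases m)
    case MU
    with x show ?thesis
      by (intro exI[of _ "map Suc x"])
        (simp add: nmove_apply_b_blocks suffixes_below_map_Suc suffixes_above_map_Suc rev_map)
  next
    case MV
    with x show ?thesis
      by (intro exI[of _ "rtally x"])
        (simp add: nmove_apply_b_blocks rev_rtally suffixes_below_tally suffixes_above_rtally)
  qed
qed

lemma a_blocks_reachable_suffixes:
  assumes "nmoves_apply ms [LA, LB] = a_blocks x"
  shows "suffixes_below x" "suffixes_above (rev x)"
  using reachable_a_blocks[of ms] assms a_blocks_inject by metis+

lemma b_blocks_reachable_suffixes:
  assumes "nmoves_apply ms [LA, LB] = b_blocks x"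
  shows "suffixes_below (rev x)" "suffixes_above x"
  using reachable_b_blocks[of ms] assms b_blocks_inject by metis+

theorem lemma4p6:
  fixes ms :: "nmove list" and es :: "nat list"
  shows
  "(nmoves_apply ms [LA, LB] = concat (map (\<lambda>e. replicate e LA @ [LB]) es)
      \<and> (\<forall>e\<in>set es. e \<ge> 1)
    \<longrightarrow> (\<forall>i\<in>{2..length es}.
          lex_less (seq_inf (drop (i - 1) es)) (seq_inf es)
        \<and> lex_less (seq_inf (rev es)) (seq_inf (drop (i - 1) (rev es)))))
   \<and>
   (nmoves_apply ms [LA, LB] = concat (map (\<lambda>e. LA # replicate e LB) es)
      \<and> (\<forall>e\<in>set es. e \<ge> 1)
    \<longrightarrow> (\<forall>i\<in>{2..length es}.
          lex_less (seq_one es) (seq_one (drop (i - 1) es))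
        \<and> lex_less (seq_one (drop (i - 1) (rev es))) (seq_one (rev es))))"
proof (intro conjI impI ballI; elim conjE)
  fix i assume word: "nmoves_apply ms [LA, LB] = concat (map (\<lambda>e. replicate e LA @ [LB]) es)"
    and "i \<in> {2..length es}"
  then have k: "0 < i - 1" "i - 1 < length es" by auto
  from word have "suffixes_below es" "suffixes_above (rev es)"
    using a_blocks_reachable_suffixes unfolding a_blocks_def by blast+
  with k show "lex_less (seq_inf (drop (i - 1) es)) (seq_inf es)"
    and "lex_less (seq_inf (rev es)) (seq_inf (drop (i - 1) (rev es)))"
    unfolding suffixes_below_def suffixes_above_def
    by (auto intro: lex_inf_less_imp_lex_less_seq_inf)
next
  fix i assume word: "nmoves_apply ms [LA, LB] = concat (map (\<lambda>e. LA # replicate e LB) es)"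
    and "i \<in> {2..length es}"
  then have k: "0 < i - 1" "i - 1 < length es" by auto
  from word have below: "suffixes_below (rev es)" and above: "suffixes_above es"
    using b_blocks_reachable_suffixes unfolding b_blocks_def by blast+
  have "\<not> prefix (rev es) (drop (i - 1) (rev es))"
    using k prefix_length_le by fastforce
  with below k show "lex_less (seq_one (drop (i - 1) (rev es))) (seq_one (rev es))"
    unfolding suffixes_below_def by (auto intro: lex_inf_less_imp_lex_less_seq_one)
  from above k show "lex_less (seq_one es) (seq_one (drop (i - 1) es))"
    using drop_not_prefix[OF below k]
    unfolding suffixes_above_def by (auto intro: lex_inf_less_imp_lex_less_seq_one)
qed

end
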